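(* Let $G=\mathrm{GL}_n$ with diagonal torus $A$, let $M=M_{(m_1,\dots,m_r)}$ be a standard (block diagonal) Levi subgroup, let $\mu\in X_*(A)_{\mathrm{dom}}$ be minuscule and let $x\in\pi_1(M)$. The following are equivalent: (i) $x\in\kappa_M(W\mu)$; (ii) the unique $\nu\in X_M\otimes\mathbf Q$ mapping to $x$ under $\kappa_M\otimes\mathbf Q$ lies in $\mathrm{Conv}(W\mu)$. Moreover, if $x$ satisfies these conditions and $\tilde\nu\in X_*(A)$ is the unique $M$-dominant $M$-minuscule element with $\kappa_M(\tilde\nu)=x$, then $\tilde\nu\in W\mu$.
   Context: $X_*(A)=\mathbf Z^n$, $W=S_n$ acting by permutations; dominant means non-increasing entries. $\mu$ is minuscule if $\langle\mu,\alpha\rangle\in\{0,\pm1\}$ for all roots $\alpha$ (i.e. $\mu_1-\mu_n\le1$). $\pi_1(M)=X_*(A)/(\text{coroot lattice of }M)\cong\mathbf Z^r$ (block sums), $\kappa_M$ the projection $X_*(A)\to\pi_1(M)$. $A_M$ is the maximal split torus in the center of $M$, $X_M=X_*(A_M)$ (vectors constant on blocks); $\kappa_M\otimes\mathbf Q$ restricts to an isomorphism $X_M\otimes\mathbf Q\to\pi_1(M)\otimes\mathbf Q$. $\mathrm{Conv}$ denotes convex hull in $\mathbf R^n$. $M$-dominant means non-increasing within each block; $M$-minuscule means $\langle\tilde\nu,\alpha\rangle\in\{0,\pm1\}$ for all roots $\alpha$ of $M$. Each element of $\pi_1(M)$ is the image of a unique $M$-dominant $M$-minuscule element. *)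

theory Defs
  imports "HOL-Analysis.Analysis"
begin

text \<open>Cocharacters of the diagonal torus of GL_n: vectors in Z^n, modelled as
  functions nat => int vanishing outside {..<n}.  The standard Levi
  M = M_(m_0,...,m_(r-1)) is given by block sizes m j (j < r) with sum n;
  block j is the index interval blk m j.\<close>

definition vec :: "nat \<Rightarrow> (nat \<Rightarrow> 'a::zero) set" where
  "vec n = {v. \<forall>i. n \<le> i \<longrightarrow> v i = 0}"

definition blk :: "(nat \<Rightarrow> nat) \<Rightarrow> nat \<Rightarrow> nat set" where
  "blk m j = {(\<Sum>k<j. m k) ..< (\<Sum>k<Suc j. m k)}"

definition Worb :: "nat \<Rightarrow> (nat \<Rightarrow> int) \<Rightarrow> (nat \<Rightarrow> int) set" where
  "Worb n \<mu> = {\<mu> \<circ> \<sigma> | \<sigma>. \<sigma> permutes {..<n}}"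

definition dominant :: "nat \<Rightarrow> (nat \<Rightarrow> int) \<Rightarrow> bool" where
  "dominant n \<mu> \<longleftrightarrow> (\<forall>i j. i \<le> j \<and> j < n \<longrightarrow> \<mu> j \<le> \<mu> i)"

text \<open>minuscule: <mu, alpha> in {0,1,-1} for all roots alpha = e_i - e_j (i \<noteq> j).\<close>
definition minuscule :: "nat \<Rightarrow> (nat \<Rightarrow> int) \<Rightarrow> bool" where
  "minuscule n \<mu> \<longleftrightarrow> (\<forall>i j. i < n \<and> j < n \<and> i \<noteq> j \<longrightarrow> \<mu> i - \<mu> j \<in> {0, 1, -1})"

text \<open>kappa_M : X_*(A) -> pi_1(M) = Z^r (block sums); also used for its
  rationalisation (real coefficients).\<close>
definition kappaM :: "(nat \<Rightarrow> nat) \<Rightarrow> nat \<Rightarrow> (nat \<Rightarrow> 'a::comm_monoid_add) \<Rightarrow> nat \<Rightarrow> 'a" where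
  "kappaM m r v = (\<lambda>j. if j < r then (\<Sum>i\<in>blk m j. v i) else 0)"

definition M_dominant :: "(nat \<Rightarrow> nat) \<Rightarrow> nat \<Rightarrow> (nat \<Rightarrow> int) \<Rightarrow> bool" where
  "M_dominant m r v \<longleftrightarrow>
     (\<forall>j<r. \<forall>i\<in>blk m j. \<forall>i'\<in>blk m j. i \<le> i' \<longrightarrow> v i' \<le> v i)"

definition M_minuscule :: "(nat \<Rightarrow> nat) \<Rightarrow> nat \<Rightarrow> (nat \<Rightarrow> int) \<Rightarrow> bool" where
  "M_minuscule m r v \<longleftrightarrow>
     (\<forall>j<r. \<forall>i\<in>blk m j. \<forall>i'\<in>blk m j. i \<noteq> i' \<longrightarrow> v i - v i' \<in> {0, 1, -1})"

text \<open>X_M tensor Q, viewed inside R^n: vectors constant on each block.\<close>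
definition XM_Q :: "(nat \<Rightarrow> nat) \<Rightarrow> nat \<Rightarrow> nat \<Rightarrow> (nat \<Rightarrow> real) set" where
  "XM_Q m r n = {\<nu> \<in> vec n. (\<forall>i. \<nu> i \<in> \<rat>) \<and>
      (\<forall>j<r. \<forall>i\<in>blk m j. \<forall>i'\<in>blk m j. \<nu> i = \<nu> i')}"

definition Conv :: "(nat \<Rightarrow> real) set \<Rightarrow> (nat \<Rightarrow> real) set" where
  "Conv S = {v. \<exists>F c. finite F \<and> F \<subseteq> S \<and> (\<forall>s\<in>F. 0 \<le> c s) \<and> sum c F = 1 \<and>
                      v = (\<lambda>i. \<Sum>s\<in>F. c s * s i)}"

definition to_real :: "(nat \<Rightarrow> int) \<Rightarrow> nat \<Rightarrow> real" where
  "to_real v = (\<lambda>i. real_of_int (v i))"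

end

theory Submission
  imports Defs
begin

text \<open>A dominant minuscule \<open>\<mu>\<close> takes only two adjacent values \<open>a\<close> and \<open>a + 1\<close>, so \<open>W\<mu>\<close>
  consists of the vectors with entries in \<open>{a, a + 1}\<close> and the same total as \<open>\<mu>\<close>.
  Both conditions (i) and (ii) are equivalent to \<open>x\<close> being admissible: every block sum
  \<open>x\<^sub>j\<close> lies between \<open>a m\<^sub>j\<close> and \<open>(a + 1) m\<^sub>j\<close>, and \<open>\<Sum> x\<^sub>j = \<Sum> \<mu>\<^sub>i\<close>.
  These are linear inequalities valid on \<open>W\<mu>\<close>, hence on its convex hull.
  Conversely, putting the \<open>x\<^sub>j - a m\<^sub>j\<close> entries \<open>a + 1\<close> of block \<open>j\<close> on a cyclic interval
  gives a preimage of \<open>x\<close> in \<open>W\<mu>\<close>, and averaging over all rotations of these intervals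
  gives the block-constant point \<open>\<nu>\<close>, which therefore lies in \<open>Conv(W\<mu>)\<close>.
  Finally, an \<open>M\<close>-minuscule \<open>\<nu>\<close> takes two adjacent values on each block, and the bounds
  on its block sums force them to be \<open>a\<close> and \<open>a + 1\<close>.\<close>

lemma blk_eq: "blk m j = {sum m {..<j} ..< sum m {..<j} + m j}"
  by (simp add: blk_def)

lemma finite_blk [simp]: "finite (blk m j)"
  by (simp add: blk_def)

lemma card_blk [simp]: "card (blk m j) = m j"
  by (simp add: blk_eq)

lemma blk_disjoint:
  assumes "j \<noteq> j'"
  shows "blk m j \<inter> blk m j' = {}"
proof -
  have "blk m j \<inter> blk m j' = {}" if "j < j'" for j j'
  proof -
    have "sum m {..<Suc j} \<le> sum m {..<j'}"
      using that by (intro sum_mono2) auto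
    then show ?thesis by (auto simp: blk_eq)
  qed
  with assms show ?thesis
    by (metis Int_commute linorder_neqE_nat)
qed

lemma UN_blk: "(\<Union>j<r. blk m j) = {..<sum m {..<r}}"
  by (induction r) (auto simp: blk_eq lessThan_Suc)

lemma sum_over_blocks: "sum f {..<sum m {..<r}} = (\<Sum>j<r. sum f (blk m j))"
  by (subst UN_blk [symmetric], rule sum.UNION_disjoint) (auto dest: blk_disjoint)

lemma sum_blk_shift: "sum g (blk m j) = (\<Sum>s<m j. g (sum m {..<j} + s))"
  using sum.shift_bounds_nat_ivl[of g 0 "sum m {..<j}" "m j"]
  by (simp add: blk_eq lessThan_atLeast0 add.commute)

definition blockwise :: "(nat \<Rightarrow> nat) \<Rightarrow> nat \<Rightarrow> (nat \<Rightarrow> nat \<Rightarrow> 'a::comm_monoid_add) \<Rightarrow> nat \<Rightarrow> 'a" where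
  "blockwise m r g i = (\<Sum>j<r. if i \<in> blk m j then g j i else 0)"

lemma blockwise_blk:
  assumes "j < r" "i \<in> blk m j"
  shows "blockwise m r g i = g j i"
proof -
  have "blockwise m r g i = (\<Sum>j'<r. if j' = j then g j i else 0)"
    unfolding blockwise_def using assms blk_disjoint by (intro sum.cong) auto
  then show ?thesis using assms(1) by simp
qed

lemma kappaM_blockwise:
  "j < r \<Longrightarrow> kappaM m r (blockwise m r g) j = sum (g j) (blk m j)"
  by (auto simp: kappaM_def blockwise_blk intro: sum.cong)

lemma sum_shift_mod:
  fixes p :: nat
  assumes "0 < p"
  shows "(\<Sum>t<p. f ((c + t) mod p)) = (\<Sum>u<p. f u)"
proof -
  have "inj_on (\<lambda>t. (c + t) mod p) {..<p}"
  proof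
    fix x y assume "x \<in> {..<p}" "y \<in> {..<p}" "(c + x) mod p = (c + y) mod p"
    then obtain q1 q2 where "x + p * q1 = y + p * q2" and "x < p" "y < p"
      by (auto simp: nat_mod_eq_iff)
    then show "x = y"
      by (metis mod_less mod_mult_self1 mult.commute)
  qed
  moreover have "(\<lambda>t. (c + t) mod p) ` {..<p} \<subseteq> {..<p}"
    using assms by auto
  ultimately have "bij_betw (\<lambda>t. (c + t) mod p) {..<p} {..<p}"
    by (simp add: bij_betw_def endo_inj_surj)
  then show ?thesis
    by (rule sum.reindex_bij_betw)
qed

lemma sum_shift_mod_mult:
  fixes f :: "nat \<Rightarrow> 'a::semiring_1"
  assumes "0 < p"
  shows "(\<Sum>t<q * p. f ((c + t) mod p)) = of_nat q * (\<Sum>u<p. f u)"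
proof -
  have "(\<Sum>t\<in>{s * p..<s * p + p}. f ((c + t) mod p)) = (\<Sum>u<p. f u)" for s
  proof -
    have "(\<Sum>t\<in>{s * p..<s * p + p}. f ((c + t) mod p)) = (\<Sum>t<p. f ((c + (t + s * p)) mod p))"
      using sum.shift_bounds_nat_ivl[of "\<lambda>t. f ((c + t) mod p)" 0 "s * p" p]
      by (simp add: lessThan_atLeast0 add.commute)
    also have "\<dots> = (\<Sum>t<p. f ((c + t) mod p))"
      by (simp add: add.assoc[symmetric])
    finally show ?thesis using sum_shift_mod[OF assms] by simp
  qed
  then show ?thesis
    by (simp flip: sum.nat_group)
qed

lemma sum_of_bool_less:
  fixes k p :: nat
  assumes "k \<le> p"
  shows "(\<Sum>u<p. of_bool (u < k) :: 'a::semiring_1) = of_nat k"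
proof -
  have "{..<p} \<inter> {u. u < k} = {..<k}"
    using assms by auto
  then show ?thesis
    by simp
qed

lemma sum_to_real: "sum (to_real w) I = real_of_int (sum w I)"
  by (simp add: to_real_def)

lemma Conv_sum_bounds:
  assumes "v \<in> Conv S" and "finite I"
    and "\<And>s. s \<in> S \<Longrightarrow> lo \<le> sum s I \<and> sum s I \<le> hi"
  shows "lo \<le> sum v I \<and> sum v I \<le> hi"
proof -
  obtain F c where F: "finite F" "F \<subseteq> S" "\<forall>s\<in>F. 0 \<le> c s" "sum c F = 1"
    and v: "v = (\<lambda>i. \<Sum>s\<in>F. c s * s i)"
    using assms(1) unfolding Conv_def by blast
  have "sum v I = (\<Sum>s\<in>F. c s * sum s I)"
    unfolding v by (simp add: sum.swap[of _ F] sum_distrib_left)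
  moreover have "(\<Sum>s\<in>F. c s * lo) \<le> (\<Sum>s\<in>F. c s * sum s I)"
    and "(\<Sum>s\<in>F. c s * sum s I) \<le> (\<Sum>s\<in>F. c s * hi)"
    using F assms(3) by (auto intro!: sum_mono mult_left_mono)
  ultimately show ?thesis
    using F(4) by (simp flip: sum_distrib_right)
qed

lemma average_in_Conv:
  assumes "0 < L" and "\<And>t. t < L \<Longrightarrow> f t \<in> S"
  shows "(\<lambda>i. (\<Sum>t<L. f t i) / real L) \<in> Conv S"
proof -
  define F where "F = f ` {..<L}"
  define c where "c s = real (card {t \<in> {..<L}. f t = s}) / real L" for s
  have by_value: "(\<Sum>t<L. g t) = (\<Sum>s\<in>F. \<Sum>t\<in>{t \<in> {..<L}. f t = s}. g t)"
    for g :: "nat \<Rightarrow> real"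
    unfolding F_def by (rule sum.image_gen) simp
  from by_value[of "\<lambda>_. 1"] have "sum c F = 1"
    using assms(1) by (simp add: c_def flip: sum_divide_distrib)
  moreover from by_value[of "\<lambda>t. f t i" for i]
  have "(\<Sum>t<L. f t i) / real L = (\<Sum>s\<in>F. c s * s i)" for i
    by (simp add: c_def sum_divide_distrib)
  ultimately show ?thesis
    unfolding Conv_def using assms(2) by (auto simp: F_def c_def intro!: exI[of _ F] exI[of _ c])
qed

lemma Worb_iff_image_mset:
  assumes "\<mu> \<in> vec n"
  shows "w \<in> Worb n \<mu> \<longleftrightarrow>
    w \<in> vec n \<and> image_mset w (mset_set {..<n}) = image_mset \<mu> (mset_set {..<n})"
proof
  assume "w \<in> Worb n \<mu>"
  then obtain \<sigma> where \<sigma>: "\<sigma> permutes {..<n}" and w: "w = \<mu> \<circ> \<sigma>"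
    by (auto simp: Worb_def)
  show "w \<in> vec n \<and> image_mset w (mset_set {..<n}) = image_mset \<mu> (mset_set {..<n})"
    using assms \<sigma> permutes_implies_image_mset_eq[OF \<sigma>, of w \<mu>]
    by (auto simp: w vec_def permutes_not_in)
next
  assume w: "w \<in> vec n \<and> image_mset w (mset_set {..<n}) = image_mset \<mu> (mset_set {..<n})"
  then obtain \<sigma> where \<sigma>: "\<sigma> permutes {..<n}" and on_n: "\<forall>i\<in>{..<n}. w i = \<mu> (\<sigma> i)"
    using image_mset_eq_implies_permutes[OF finite_lessThan, where f=w and f'=\<mu>] by blast
  have "w i = \<mu> (\<sigma> i)" for i
  proof (cases "i < n")
    case False
    with w assms \<sigma> show ?thesis by (simp add: vec_def permutes_not_in)
  qed (use on_n in simp)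
  then have "w = \<mu> \<circ> \<sigma>"
    by (simp add: fun_eq_iff)
  with \<sigma> show "w \<in> Worb n \<mu>"
    by (auto simp: Worb_def)
qed

lemma sum_two_valued:
  fixes f :: "'a \<Rightarrow> int"
  assumes "finite A" and "\<forall>i\<in>A. f i \<in> {a, a + 1}"
  shows "sum f A = int (card A) * a + int (card {i \<in> A. f i = a + 1})"
proof -
  have "sum f A = (\<Sum>i\<in>A. a + of_bool (f i = a + 1))"
    using assms(2) by (intro sum.cong) auto
  then show ?thesis
    using assms(1) by (simp add: sum.distrib Int_def conj_commute)
qed

lemma image_mset_two_valued_eq:
  fixes f g :: "'a \<Rightarrow> int"
  assumes A: "finite A" and f: "\<forall>i\<in>A. f i \<in> {a, a + 1}" and g: "\<forall>i\<in>A. g i \<in> {a, a + 1}"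
    and sums: "sum f A = sum g A"
  shows "image_mset f (mset_set A) = image_mset g (mset_set A)"
proof (rule multiset_eqI)
  fix b
  have level_sets: "{i \<in> A. h i = a} = A - {i \<in> A. h i = a + 1}"
    "b \<notin> {a, a + 1} \<Longrightarrow> {i \<in> A. h i = b} = {}"
    if "\<forall>i\<in>A. h i \<in> {a, a + 1}" for h :: "'a \<Rightarrow> int"
    using that by auto
  have "card {i \<in> A. f i = a + 1} = card {i \<in> A. g i = a + 1}"
    using sums sum_two_valued[OF A f] sum_two_valued[OF A g] by simp
  then have "card {i \<in> A. f i = b} = card {i \<in> A. g i = b}"
    using A level_sets[OF f] level_sets[OF g] by (cases "b \<in> {a, a + 1}") (auto simp: card_Diff_subset simp del: Collect_empty_eq)
  then show "count (image_mset f (mset_set A)) b = count (image_mset g (mset_set A)) b"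
    using A by (simp add: count_image_mset_eq_card_vimage)
qed

lemma dominant_minuscule_values:
  assumes "dominant n \<mu>" and "minuscule n \<mu>" and "i < n"
  shows "\<mu> i \<in> {\<mu> (n - 1), \<mu> (n - 1) + 1}"
proof (cases "i = n - 1")
  case False
  have "\<mu> (n - 1) \<le> \<mu> i"
    using assms(1,3) unfolding dominant_def by auto
  moreover have "\<mu> i - \<mu> (n - 1) \<in> {0, 1, -1}"
    using assms(2,3) False unfolding minuscule_def by auto
  ultimately show ?thesis by auto
qed simp

lemma near_constant_between_bounds:
  fixes v :: "'a \<Rightarrow> int"
  assumes "finite B" and "i \<in> B"
    and near: "\<forall>i\<in>B. \<forall>i'\<in>B. \<bar>v i - v i'\<bar> \<le> 1"
    and lo: "int (card B) * a \<le> sum v B" and hi: "sum v B \<le> int (card B) * (a + 1)"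
  shows "v i \<in> {a, a + 1}"
proof -
  have split: "sum v B = v i + sum v (B - {i})"
    using assms(1,2) by (rule sum.remove)
  have "0 < card B"
    using assms(1,2) card_gt_0_iff by blast
  then have card: "int (card (B - {i})) = int (card B) - 1"
    using assms(1,2) by (simp add: card_Diff_singleton)
  have others: "v i - 1 \<le> v i' \<and> v i' \<le> v i + 1" if "i' \<in> B - {i}" for i'
  proof -
    have "\<bar>v i - v i'\<bar> \<le> 1"
      using near assms(2) that by blast
    then show ?thesis by (simp add: abs_le_iff)
  qed
  have "\<not> a + 2 \<le> v i"
  proof
    assume "a + 2 \<le> v i"
    then have "int (card (B - {i})) * (a + 1) \<le> sum v (B - {i})"
      using others by (intro sum_bounded_below) fastforce
    then show False
      using split card hi \<open>a + 2 \<le> v i\<close> by (simp add: algebra_simps)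
  qed
  moreover have "\<not> v i \<le> a - 1"
  proof
    assume "v i \<le> a - 1"
    then have "sum v (B - {i}) \<le> int (card (B - {i})) * a"
      using others by (intro sum_bounded_above) fastforce
    then show False
      using split card lo \<open>v i \<le> a - 1\<close> by (simp add: algebra_simps)
  qed
  ultimately show ?thesis by auto
qed

locale levi_blocks =
  fixes n r :: nat and m :: "nat \<Rightarrow> nat"
  assumes blocks_pos: "\<forall>j<r. 0 < m j"
    and blocks_sum: "(\<Sum>j<r. m j) = n"
begin

lemma blk_subset: "j < r \<Longrightarrow> blk m j \<subseteq> {..<n}"
  using UN_blk[of m r] blocks_sum by auto

lemma block_exists: "i < n \<Longrightarrow> \<exists>j<r. i \<in> blk m j"
  using UN_blk[of m r] blocks_sum by auto

lemma blockwise_outside: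
  assumes "n \<le> i"
  shows "blockwise m r g i = 0"
proof -
  have "i \<notin> (\<Union>j<r. blk m j)"
    using assms UN_blk[of m r] blocks_sum by auto
  then show ?thesis
    unfolding blockwise_def by (intro sum.neutral) auto
qed

lemma sum_blocks: "sum f {..<n} = (\<Sum>j<r. sum f (blk m j))"
  using sum_over_blocks[of f m r] blocks_sum by simp

lemma sum_kappaM: "(\<Sum>j<r. kappaM m r v j) = sum v {..<n}"
  by (simp add: kappaM_def sum_blocks)

definition block_average :: "(nat \<Rightarrow> int) \<Rightarrow> nat \<Rightarrow> real" where
  "block_average x = blockwise m r (\<lambda>j _. real_of_int (x j) / real (m j))"

lemma block_average_blk:
  "j < r \<Longrightarrow> i \<in> blk m j \<Longrightarrow> block_average x i = real_of_int (x j) / real (m j)"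
  by (simp add: block_average_def blockwise_blk)

lemma block_average_outside: "n \<le> i \<Longrightarrow> block_average x i = 0"
  by (simp add: block_average_def blockwise_outside)

lemma kappaM_block_average:
  assumes "x \<in> vec r"
  shows "kappaM m r (block_average x) = to_real x"
proof
  fix j
  show "kappaM m r (block_average x) j = to_real x j"
  proof (cases "j < r")
    case True
    then show ?thesis
      using blocks_pos by (simp add: block_average_def kappaM_blockwise to_real_def)
  next
    case False
    then show ?thesis
      using assms by (simp add: kappaM_def to_real_def vec_def)
  qed
qed

lemma block_average_in_XM_Q: "block_average x \<in> XM_Q m r n"
proof -
  have "block_average x i \<in> \<rat>" for i
  proof (cases "i < n")
    case True
    then obtain j where "j < r" "i \<in> blk m j"
      using block_exists by blast
    then show ?thesis
      by (simp add: block_average_blk)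
  qed (simp add: block_average_outside)
  then show ?thesis
    by (auto simp: XM_Q_def vec_def block_average_blk block_average_outside)
qed

lemma XM_Q_kappaM_unique:
  assumes "\<nu> \<in> XM_Q m r n" and "kappaM m r \<nu> = to_real x"
  shows "\<nu> = block_average x"
proof
  fix i
  show "\<nu> i = block_average x i"
  proof (cases "i < n")
    case True
    then obtain j where j: "j < r" "i \<in> blk m j"
      using block_exists by blast
    have "\<forall>i'\<in>blk m j. \<nu> i' = \<nu> i"
      using assms(1) j unfolding XM_Q_def by blast
    then have "sum \<nu> (blk m j) = real (m j) * \<nu> i"
      by simp
    moreover have "sum \<nu> (blk m j) = real_of_int (x j)"
      using fun_cong[OF assms(2), of j] j by (simp add: kappaM_def to_real_def)
    ultimately show ?thesis
      using j blocks_pos by (simp add: block_average_blk field_simps)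
  next
    case False
    then show ?thesis
      using assms(1) by (simp add: XM_Q_def vec_def block_average_outside)
  qed
qed

lemma the_XM_Q_kappaM:
  assumes "x \<in> vec r"
  shows "(THE \<nu>. \<nu> \<in> XM_Q m r n \<and> kappaM m r \<nu> = to_real x) = block_average x"
  using block_average_in_XM_Q kappaM_block_average[OF assms] XM_Q_kappaM_unique
  by (intro the_equality) auto

end

locale minuscule_levi = levi_blocks +
  fixes \<mu> :: "nat \<Rightarrow> int" and a :: int
  assumes mu_vec: "\<mu> \<in> vec n"
    and mu_values: "\<forall>i<n. \<mu> i \<in> {a, a + 1}"
begin

lemma Worb_iff:
  "w \<in> Worb n \<mu> \<longleftrightarrow>
     w \<in> vec n \<and> (\<forall>i<n. w i \<in> {a, a + 1}) \<and> sum w {..<n} = sum \<mu> {..<n}"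
proof -
  have "image_mset w (mset_set {..<n}) = image_mset \<mu> (mset_set {..<n}) \<longleftrightarrow>
      (\<forall>i<n. w i \<in> {a, a + 1}) \<and> sum w {..<n} = sum \<mu> {..<n}"
  proof
    assume eq: "image_mset w (mset_set {..<n}) = image_mset \<mu> (mset_set {..<n})"
    have "w ` {..<n} = \<mu> ` {..<n}"
      using arg_cong[OF eq, of set_mset] by simp
    moreover have "sum w {..<n} = sum \<mu> {..<n}"
      using arg_cong[OF eq, of sum_mset] by (simp add: sum_unfold_sum_mset)
    ultimately show "(\<forall>i<n. w i \<in> {a, a + 1}) \<and> sum w {..<n} = sum \<mu> {..<n}"
      using mu_values by (metis image_eqI imageE lessThan_iff)
  next
    assume "(\<forall>i<n. w i \<in> {a, a + 1}) \<and> sum w {..<n} = sum \<mu> {..<n}"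
    then show "image_mset w (mset_set {..<n}) = image_mset \<mu> (mset_set {..<n})"
      using mu_values by (intro image_mset_two_valued_eq[where a = a]) auto
  qed
  then show ?thesis
    using Worb_iff_image_mset[OF mu_vec] by simp
qed

lemma Worb_blk_sum_bounds:
  assumes "w \<in> Worb n \<mu>" and "j < r"
  shows "a * int (m j) \<le> sum w (blk m j) \<and> sum w (blk m j) \<le> (a + 1) * int (m j)"
proof -
  have "\<forall>i\<in>blk m j. a \<le> w i \<and> w i \<le> a + 1"
    using assms Worb_iff blk_subset by fastforce
  then show ?thesis
    using sum_bounded_below[of "blk m j" a w] sum_bounded_above[of "blk m j" w "a + 1"]
    by (auto simp: mult.commute)
qed

definition admissible :: "(nat \<Rightarrow> int) \<Rightarrow> bool" where
  "admissible x \<longleftrightarrow>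
     (\<forall>j<r. a * int (m j) \<le> x j \<and> x j \<le> (a + 1) * int (m j)) \<and> (\<Sum>j<r. x j) = sum \<mu> {..<n}"

lemma admissible_kappaM_Worb:
  assumes "w \<in> Worb n \<mu>"
  shows "admissible (kappaM m r w)"
proof -
  have "(\<Sum>j<r. kappaM m r w j) = sum \<mu> {..<n}"
    using assms by (simp add: sum_kappaM Worb_iff)
  then show ?thesis
    using Worb_blk_sum_bounds[OF assms] by (simp add: admissible_def kappaM_def)
qed

lemma Conv_Worb_sums:
  assumes \<nu>: "\<nu> \<in> Conv (to_real ` Worb n \<mu>)"
  shows "j < r \<Longrightarrow> real_of_int (a * int (m j)) \<le> sum \<nu> (blk m j) \<and>
      sum \<nu> (blk m j) \<le> real_of_int ((a + 1) * int (m j))"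
    and "sum \<nu> {..<n} = real_of_int (sum \<mu> {..<n})"
proof -
  show "real_of_int (a * int (m j)) \<le> sum \<nu> (blk m j) \<and>
      sum \<nu> (blk m j) \<le> real_of_int ((a + 1) * int (m j))" if j: "j < r" for j
  proof (rule Conv_sum_bounds[OF \<nu> finite_blk])
    fix s assume "s \<in> to_real ` Worb n \<mu>"
    then obtain w where "w \<in> Worb n \<mu>" and "s = to_real w"
      by blast
    then show "real_of_int (a * int (m j)) \<le> sum s (blk m j) \<and>
        sum s (blk m j) \<le> real_of_int ((a + 1) * int (m j))"
      using Worb_blk_sum_bounds[OF _ j] by (simp only: sum_to_real of_int_le_iff)
  qed
  have "real_of_int (sum \<mu> {..<n}) \<le> sum \<nu> {..<n} \<and> sum \<nu> {..<n} \<le> real_of_int (sum \<mu> {..<n})"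
  proof (rule Conv_sum_bounds[OF \<nu> finite_lessThan])
    fix s assume "s \<in> to_real ` Worb n \<mu>"
    then obtain w where "w \<in> Worb n \<mu>" and "s = to_real w"
      by blast
    then show "real_of_int (sum \<mu> {..<n}) \<le> sum s {..<n} \<and> sum s {..<n} \<le> real_of_int (sum \<mu> {..<n})"
      by (simp only: sum_to_real Worb_iff) simp
  qed
  then show "sum \<nu> {..<n} = real_of_int (sum \<mu> {..<n})"
    by linarith
qed

lemma admissible_if_Conv:
  assumes \<nu>: "\<nu> \<in> Conv (to_real ` Worb n \<mu>)" and x: "kappaM m r \<nu> = to_real x"
  shows "admissible x"
proof -
  have blocks: "sum \<nu> (blk m j) = real_of_int (x j)" if "j < r" for j
    using fun_cong[OF x, of j] that by (simp add: kappaM_def to_real_def)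
  have "a * int (m j) \<le> x j \<and> x j \<le> (a + 1) * int (m j)" if "j < r" for j
    using Conv_Worb_sums(1)[OF \<nu> that] unfolding blocks[OF that] of_int_le_iff .
  moreover have "real_of_int (\<Sum>j<r. x j) = real_of_int (sum \<mu> {..<n})"
    using Conv_Worb_sums(2)[OF \<nu>] by (simp add: sum_blocks blocks)
  ultimately show ?thesis
    unfolding admissible_def of_int_eq_iff by blast
qed

lemma admissible_excess:
  assumes "admissible x" and "j < r"
  shows "x j = a * int (m j) + int (nat (x j - a * int (m j)))"
    and "nat (x j - a * int (m j)) \<le> m j"
  using assms by (auto simp: admissible_def algebra_simps)

text \<open>The parameter \<open>t\<close> rotates, inside each block, the cyclic interval of positions
  carrying the value \<open>a + 1\<close>.\<close>

definition orbit_witness :: "(nat \<Rightarrow> int) \<Rightarrow> nat \<Rightarrow> nat \<Rightarrow> int" where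
  "orbit_witness x t = blockwise m r (\<lambda>j i.
     a + of_bool ((i - sum m {..<j} + t) mod m j < nat (x j - a * int (m j))))"

lemma orbit_witness_blk:
  "j < r \<Longrightarrow> i \<in> blk m j \<Longrightarrow>
    orbit_witness x t i = a + of_bool ((i - sum m {..<j} + t) mod m j < nat (x j - a * int (m j)))"
  by (simp add: orbit_witness_def blockwise_blk)

lemma orbit_witness_blk_sum:
  assumes "admissible x" and j: "j < r"
  shows "sum (orbit_witness x t) (blk m j) = x j"
proof -
  define k where "k = nat (x j - a * int (m j))"
  have "sum (orbit_witness x t) (blk m j) = (\<Sum>s<m j. orbit_witness x t (sum m {..<j} + s))"
    by (rule sum_blk_shift)
  also have "\<dots> = (\<Sum>s<m j. a + of_bool ((t + s) mod m j < k))"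
    using j by (intro sum.cong) (auto simp: orbit_witness_blk blk_eq k_def add.commute)
  also have "\<dots> = int (m j) * a + (\<Sum>u<m j. of_bool (u < k))"
    using blocks_pos j sum_shift_mod[of "m j" "\<lambda>u. of_bool (u < k)" t]
    by (simp add: sum.distrib del: sum_of_bool_eq)
  also have "\<dots> = int (m j) * a + int k"
    using admissible_excess(2)[OF assms, folded k_def] by (simp only: sum_of_bool_less)
  finally show ?thesis
    using admissible_excess(1)[OF assms] by (simp add: k_def mult.commute)
qed

lemma orbit_witness_in_Worb:
  assumes "admissible x"
  shows "orbit_witness x t \<in> Worb n \<mu>"
  unfolding Worb_iff
proof (intro conjI allI impI)
  show "orbit_witness x t \<in> vec n"
    by (simp add: vec_def orbit_witness_def blockwise_outside)
  show "orbit_witness x t i \<in> {a, a + 1}" if "i < n" for i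
    using block_exists[OF that] by (auto simp: orbit_witness_blk)
  show "sum (orbit_witness x t) {..<n} = sum \<mu> {..<n}"
    using assms by (simp add: sum_blocks orbit_witness_blk_sum admissible_def)
qed

lemma kappaM_orbit_witness:
  assumes "admissible x" and "x \<in> vec r"
  shows "kappaM m r (orbit_witness x t) = x"
  using assms orbit_witness_blk_sum by (auto simp: kappaM_def vec_def)

lemma sum_orbit_witness:
  assumes "admissible x" and j: "j < r" "i \<in> blk m j" and "m j dvd L"
  shows "(\<Sum>t<L. real_of_int (orbit_witness x t i)) = real L * block_average x i"
proof -
  define k where "k = nat (x j - a * int (m j))"
  define c where "c = i - sum m {..<j}"
  have pos: "0 < m j"
    using blocks_pos j by simp
  obtain q where L: "L = q * m j"
    using assms(4) by (metis dvdE mult.commute)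
  have "(\<Sum>t<L. real_of_int (orbit_witness x t i)) = (\<Sum>t<L. a + of_bool ((c + t) mod m j < k))"
    using j by (simp add: orbit_witness_blk c_def k_def)
  also have "\<dots> = real L * a + real q * (\<Sum>u<m j. of_bool (u < k))"
    using sum_shift_mod_mult[OF pos, of "\<lambda>u. of_bool (u < k)" c q]
    by (simp add: sum.distrib L del: sum_of_bool_eq)
  also have "\<dots> = real L * a + real q * real k"
    using admissible_excess(2)[OF assms(1) j(1), folded k_def] by (simp only: sum_of_bool_less)
  also have "\<dots> = real L * (real_of_int (x j) / real (m j))"
  proof -
    have "real_of_int (x j) = real_of_int a * real (m j) + real k"
      using admissible_excess(1)[OF assms(1) j(1), folded k_def] by simp
    then show ?thesis
      using pos by (simp add: L field_simps)
  qed
  also have "\<dots> = real L * block_average x i"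
    by (simp only: block_average_blk[OF j])
  finally show ?thesis .
qed

lemma block_average_in_Conv:
  assumes "admissible x"
  shows "block_average x \<in> Conv (to_real ` Worb n \<mu>)"
proof -
  define L where "L = (\<Prod>j<r. m j)"
  have "0 < L"
    using blocks_pos by (simp add: L_def)
  have "(\<lambda>i. (\<Sum>t<L. to_real (orbit_witness x t) i) / real L) = block_average x"
  proof
    fix i
    show "(\<Sum>t<L. to_real (orbit_witness x t) i) / real L = block_average x i"
    proof (cases "i < n")
      case True
      then obtain j where j: "j < r" "i \<in> blk m j"
        using block_exists by blast
      have "m j dvd L"
        using j(1) by (simp add: L_def dvd_prodI)
      then show ?thesis
        using sum_orbit_witness[OF assms j] \<open>0 < L\<close> by (simp add: to_real_def)
    next
      case False
      then show ?thesis
        by (simp add: to_real_def orbit_witness_def blockwise_outside block_average_outside)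
    qed
  qed
  moreover have "(\<lambda>i. (\<Sum>t<L. to_real (orbit_witness x t) i) / real L) \<in> Conv (to_real ` Worb n \<mu>)"
    using \<open>0 < L\<close> orbit_witness_in_Worb[OF assms] by (intro average_in_Conv) auto
  ultimately show ?thesis
    by simp
qed

lemma kappaM_Worb_iff_admissible:
  assumes "x \<in> vec r"
  shows "x \<in> kappaM m r ` Worb n \<mu> \<longleftrightarrow> admissible x"
proof
  assume "admissible x"
  then show "x \<in> kappaM m r ` Worb n \<mu>"
    using kappaM_orbit_witness[OF _ assms] orbit_witness_in_Worb by (metis image_eqI)
qed (auto intro: admissible_kappaM_Worb)

lemma Conv_iff_admissible:
  assumes "x \<in> vec r"
  shows "block_average x \<in> Conv (to_real ` Worb n \<mu>) \<longleftrightarrow> admissible x"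
  using admissible_if_Conv kappaM_block_average[OF assms] block_average_in_Conv by blast

lemma M_minuscule_in_Worb:
  assumes x: "admissible x" and \<nu>: "\<nu> \<in> vec n" "M_minuscule m r \<nu>" "kappaM m r \<nu> = x"
  shows "\<nu> \<in> Worb n \<mu>"
  unfolding Worb_iff
proof (intro conjI allI impI)
  have blocks: "sum \<nu> (blk m j) = x j" if "j < r" for j
    using \<nu>(3) that by (auto simp: kappaM_def)
  show "\<nu> i \<in> {a, a + 1}" if "i < n" for i
  proof -
    obtain j where j: "j < r" "i \<in> blk m j"
      using block_exists[OF \<open>i < n\<close>] by blast
    have "\<forall>i\<in>blk m j. \<forall>i'\<in>blk m j. \<bar>\<nu> i - \<nu> i'\<bar> \<le> 1"
      using \<nu>(2) j(1) unfolding M_minuscule_def by fastforce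
    then show ?thesis
      using x j blocks[OF j(1)] unfolding admissible_def
      by (intro near_constant_between_bounds[OF finite_blk j(2)]) (auto simp: mult.commute)
  qed
  show "sum \<nu> {..<n} = sum \<mu> {..<n}"
    using x blocks by (simp add: sum_blocks admissible_def)
qed (fact \<nu>(1))

end

theorem lemma4p7:
  fixes n r :: nat and m :: "nat \<Rightarrow> nat" and \<mu> x :: "nat \<Rightarrow> int"
  assumes m_pos: "\<forall>j<r. 0 < m j"
    and m_sum: "(\<Sum>j<r. m j) = n"
    and mu_vec: "\<mu> \<in> vec n"
    and mu_dom: "dominant n \<mu>"
    and mu_min: "minuscule n \<mu>"
    and x_pi1: "x \<in> vec r"
  shows "(x \<in> kappaM m r ` Worb n \<mu> \<longleftrightarrow>
          (THE \<nu>. \<nu> \<in> XM_Q m r n \<and> kappaM m r \<nu> = to_real x) \<in> Conv (to_real ` Worb n \<mu>))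
       \<and> (x \<in> kappaM m r ` Worb n \<mu> \<longrightarrow>
          (\<forall>\<nu>t. \<nu>t \<in> vec n \<and> M_dominant m r \<nu>t \<and> M_minuscule m r \<nu>t \<and> kappaM m r \<nu>t = x
                 \<longrightarrow> \<nu>t \<in> Worb n \<mu>))"
proof -
  interpret minuscule_levi n r m \<mu> "\<mu> (n - 1)"
    using m_pos m_sum mu_vec dominant_minuscule_values[OF mu_dom mu_min]
    by unfold_locales auto
  show ?thesis
    unfolding the_XM_Q_kappaM[OF x_pi1] kappaM_Worb_iff_admissible[OF x_pi1]
      Conv_iff_admissible[OF x_pi1]
    using M_minuscule_in_Worb by blast
qed

end
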